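(* An operator $\Lambda$ satisfies balanced treatment and non-arbitrariness if and only if $\Lambda$ is the historical operator $\Phi$, i.e., for every standard rule $R$, every historical claims problem $(N,c,E,h)$ and every $i\in N$, $$\Lambda_i(R)(N,c,E,h)=\min\{c_i,R_i(N,\widetilde{c},E)+\lambda\},$$ where $\lambda\in\mathbb{R}_+$ is such that $\sum_{i\in N}\min\{c_i,R_i(N,\widetilde{c},E)+\lambda\}=E$.
   Context: Agents are elements of $\mathbb{N}$; $N$ denotes a nonempty finite subset of $\mathbb{N}$. A (standard) claims problem is a triple $(N,c,E)$ with $c\in\mathbb{R}_+^N$, $E\in\mathbb{R}_+$, $C=\sum_{i\in N}c_i>0$ and $E\le C$. An allocation for it is $x\in\mathbb{R}^N$ with $0\le x_i\le c_i$ for all $i$ and $\sum_ix_i=E$. A standard rule $R$ assigns to each standard claims problem an allocation $R(N,c,E)$; $\mathcal{R}$ is the set of standard rules. A history for $N$ is a finite sequence $h=\{(c^{(t)},x^{(t)})\}_{t=1}^{|T|}$ where for each $t$, $c^{(t)}\in\mathbb{R}_+^N$ and $x^{(t)}$ is an allocation of $(N,c^{(t)},\sum_ix^{(t)}_i)$. A historical claims problem is $(N,c,E,h)$ with $(N,c,E)$ a standard claims problem and $h$ a history for $N$; its allocations are the allocations of $(N,c,E)$. A general rule assigns to each historical claims problem an allocation. An operator $\Lambda$ assigns to each standard rule $R$ a general rule $\Lambda(R)$. The history-adjusted claims are $\widetilde{c}_i=c_i+\sum_t(c^{(t)}_i-x^{(t)}_i)$. (A $\lambda\ge0$ as in the claim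 always exists, and the resulting vector does not depend on which such $\lambda$ is chosen, so the historical operator $\Phi$ is well defined.) Axioms on operators (required for every $R\in\mathcal{R}$ and every historical problem $(N,c,E,h)$): Balanced treatment: for each $i,j\in N$ with $\Lambda_i(R)(N,c,E,h)<c_i$ and $\Lambda_j(R)(N,c,E,h)<c_j$, $\Lambda_i(R)(N,c,E,h)-R_i(N,\widetilde{c},E)=\Lambda_j(R)(N,c,E,h)-R_j(N,\widetilde{c},E)$. Non-arbitrariness: for each $i\in N$ with $\Lambda_i(R)(N,c,E,h)=c_i$ and $R_i(N,\widetilde{c},E)<c_i$, we have $\Lambda_i(R)(N,c,E,h)-R_i(N,\widetilde{c},E)\le\Lambda_j(R)(N,c,E,h)-R_j(N,\widetilde{c},E)$ for all $j\in N$ with $\Lambda_j(R)(N,c,E,h)<c_j$. *)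

theory Defs
  imports Main "HOL.Real"
begin

text \<open>Claims vectors and allocations are functions nat => real; as a canonical
  representation of elements of R^N they are required to vanish outside N.\<close>

type_synonym vec = "nat \<Rightarrow> real"
type_synonym hist = "(vec \<times> vec) list"
type_synonym srule = "nat set \<Rightarrow> vec \<Rightarrow> real \<Rightarrow> vec"
type_synonym grule = "nat set \<Rightarrow> vec \<Rightarrow> real \<Rightarrow> hist \<Rightarrow> vec"

definition claims_problem :: "nat set \<Rightarrow> vec \<Rightarrow> real \<Rightarrow> bool" where
  "claims_problem N c E \<longleftrightarrow> finite N \<and> N \<noteq> {} \<and> (\<forall>i\<in>N. 0 \<le> c i) \<and>
     (\<forall>i. i \<notin> N \<longrightarrow> c i = 0) \<and> (\<Sum>i\<in>N. c i) > 0 \<and> 0 \<le> E \<and> E \<le> (\<Sum>i\<in>N. c i)"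

definition allocation :: "nat set \<Rightarrow> vec \<Rightarrow> real \<Rightarrow> vec \<Rightarrow> bool" where
  "allocation N c E x \<longleftrightarrow> (\<forall>i\<in>N. 0 \<le> x i \<and> x i \<le> c i) \<and>
     (\<forall>i. i \<notin> N \<longrightarrow> x i = 0) \<and> (\<Sum>i\<in>N. x i) = E"

definition standard_rule :: "srule \<Rightarrow> bool" where
  "standard_rule R \<longleftrightarrow> (\<forall>N c E. claims_problem N c E \<longrightarrow> allocation N c E (R N c E))"

definition is_history :: "nat set \<Rightarrow> hist \<Rightarrow> bool" where
  "is_history N h \<longleftrightarrow> (\<forall>(ct, xt) \<in> set h.
      claims_problem N ct (\<Sum>i\<in>N. xt i) \<and> allocation N ct (\<Sum>i\<in>N. xt i) xt)"

definition hist_problem :: "nat set \<Rightarrow> vec \<Rightarrow> real \<Rightarrow> hist \<Rightarrow> bool" where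
  "hist_problem N c E h \<longleftrightarrow> claims_problem N c E \<and> is_history N h"

definition general_rule :: "grule \<Rightarrow> bool" where
  "general_rule G \<longleftrightarrow> (\<forall>N c E h. hist_problem N c E h \<longrightarrow> allocation N c E (G N c E h))"

definition operator :: "(srule \<Rightarrow> grule) \<Rightarrow> bool" where
  "operator \<Lambda> \<longleftrightarrow> (\<forall>R. standard_rule R \<longrightarrow> general_rule (\<Lambda> R))"

definition adj_claims :: "vec \<Rightarrow> hist \<Rightarrow> vec" where
  "adj_claims c h = (\<lambda>i. c i + (\<Sum>p\<leftarrow>h. fst p i - snd p i))"

definition balanced_treatment :: "(srule \<Rightarrow> grule) \<Rightarrow> bool" where
  "balanced_treatment \<Lambda> \<longleftrightarrow> (\<forall>R N c E h. standard_rule R \<longrightarrow> hist_problem N c E h \<longrightarrow>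
     (\<forall>i\<in>N. \<forall>j\<in>N. \<Lambda> R N c E h i < c i \<longrightarrow> \<Lambda> R N c E h j < c j \<longrightarrow>
        \<Lambda> R N c E h i - R N (adj_claims c h) E i = \<Lambda> R N c E h j - R N (adj_claims c h) E j))"

definition non_arbitrariness :: "(srule \<Rightarrow> grule) \<Rightarrow> bool" where
  "non_arbitrariness \<Lambda> \<longleftrightarrow> (\<forall>R N c E h. standard_rule R \<longrightarrow> hist_problem N c E h \<longrightarrow>
     (\<forall>i\<in>N. \<Lambda> R N c E h i = c i \<longrightarrow> R N (adj_claims c h) E i < c i \<longrightarrow>
        (\<forall>j\<in>N. \<Lambda> R N c E h j < c j \<longrightarrow>
          \<Lambda> R N c E h i - R N (adj_claims c h) E i \<le> \<Lambda> R N c E h j - R N (adj_claims c h) E j)))"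

definition is_historical_operator :: "(srule \<Rightarrow> grule) \<Rightarrow> bool" where
  "is_historical_operator \<Lambda> \<longleftrightarrow> (\<forall>R N c E h. standard_rule R \<longrightarrow> hist_problem N c E h \<longrightarrow>
     (\<exists>lam::real. 0 \<le> lam \<and> (\<Sum>i\<in>N. min (c i) (R N (adj_claims c h) E i + lam)) = E \<and>
        (\<forall>i\<in>N. \<Lambda> R N c E h i = min (c i) (R N (adj_claims c h) E i + lam))))"

end

theory Submission
  imports Defs
begin

text \<open>Write \<open>x\<close> for the allocation chosen by \<open>\<Lambda>(R)\<close> and \<open>r\<close> for \<open>R\<close> applied to the
  history-adjusted claims, and call \<open>x i - r i\<close> the gain of agent \<open>i\<close>. Balanced treatment says
  that all unsaturated agents (\<open>x i < c i\<close>) have a common gain \<open>\<lambda>\<close>; non-arbitrariness says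
  that every saturated agent with \<open>r i < c i\<close> gains at most \<open>\<lambda>\<close>. Together these are exactly
  \<open>x i = min (c i) (r i + \<lambda>)\<close>, provided \<open>\<lambda> \<ge> 0\<close>; and \<open>\<lambda> \<ge> 0\<close> is forced because
  \<open>x\<close> and \<open>r\<close> distribute the same estate: a negative common gain would make every agent
  receive at most \<open>r i\<close>, and the unsaturated ones strictly less.\<close>

lemma history_unpaid_nonneg:
  assumes "is_history N h" "i \<in> N"
  shows "0 \<le> (\<Sum>p\<leftarrow>h. fst p i - snd p i)"
  using assms by (intro sum_list_nonneg) (auto simp: is_history_def allocation_def)

lemma history_unpaid_outside:
  assumes "is_history N h" "i \<notin> N"
  shows "(\<Sum>p\<leftarrow>h. fst p i - snd p i) = 0"
proof -
  have "map (\<lambda>p. fst p i - snd p i) h = map (\<lambda>p. 0) h"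
    using assms by (auto simp: is_history_def claims_problem_def allocation_def)
  then show ?thesis by (metis sum_list_0)
qed

lemma claims_problem_adj_claims:
  assumes "hist_problem N c E h"
  shows "claims_problem N (adj_claims c h) E"
proof -
  have cp: "claims_problem N c E" and hist: "is_history N h"
    using assms by (auto simp: hist_problem_def)
  have ge: "c i \<le> adj_claims c h i" if "i \<in> N" for i
    using history_unpaid_nonneg[OF hist that] by (simp add: adj_claims_def)
  have "(\<Sum>i\<in>N. c i) \<le> (\<Sum>i\<in>N. adj_claims c h i)"
    using ge by (rule sum_mono)
  moreover have "adj_claims c h i = 0" if "i \<notin> N" for i
    using cp history_unpaid_outside[OF hist that] that by (simp add: claims_problem_def adj_claims_def)
  moreover have "0 \<le> adj_claims c h i" if "i \<in> N" for i
    using cp ge[OF that] that by (fastforce simp: claims_problem_def)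
  ultimately show ?thesis
    using cp unfolding claims_problem_def by fastforce
qed

definition balanced_wrt :: "nat set \<Rightarrow> vec \<Rightarrow> vec \<Rightarrow> vec \<Rightarrow> bool" where
  "balanced_wrt N c r x \<longleftrightarrow>
     (\<forall>i\<in>N. \<forall>j\<in>N. x i < c i \<longrightarrow> x j < c j \<longrightarrow> x i - r i = x j - r j)"

definition nonarbitrary_wrt :: "nat set \<Rightarrow> vec \<Rightarrow> vec \<Rightarrow> vec \<Rightarrow> bool" where
  "nonarbitrary_wrt N c r x \<longleftrightarrow>
     (\<forall>i\<in>N. x i = c i \<longrightarrow> r i < c i \<longrightarrow> (\<forall>j\<in>N. x j < c j \<longrightarrow> x i - r i \<le> x j - r j))"

lemma balanced_treatment_iff:
  "balanced_treatment \<Lambda> \<longleftrightarrow> (\<forall>R N c E h. standard_rule R \<longrightarrow> hist_problem N c E h \<longrightarrow>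
     balanced_wrt N c (R N (adj_claims c h) E) (\<Lambda> R N c E h))"
  unfolding balanced_treatment_def balanced_wrt_def ..

lemma non_arbitrariness_iff:
  "non_arbitrariness \<Lambda> \<longleftrightarrow> (\<forall>R N c E h. standard_rule R \<longrightarrow> hist_problem N c E h \<longrightarrow>
     nonarbitrary_wrt N c (R N (adj_claims c h) E) (\<Lambda> R N c E h))"
  unfolding non_arbitrariness_def nonarbitrary_wrt_def ..

lemma min_shift_imp_balanced_wrt:
  assumes "\<forall>i\<in>N. x i = min (c i) (r i + lam)"
  shows "balanced_wrt N c r x"
  using assms unfolding balanced_wrt_def by (auto simp: min_def)

lemma min_shift_imp_nonarbitrary_wrt:
  assumes "\<forall>i\<in>N. x i = min (c i) (r i + lam)"
  shows "nonarbitrary_wrt N c r x"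
  using assms unfolding nonarbitrary_wrt_def by (auto simp: min_def)

lemma unsaturated_gain_nonneg:
  assumes "finite N" "\<forall>i\<in>N. x i \<le> c i" "(\<Sum>i\<in>N. x i) = (\<Sum>i\<in>N. r i)"
    and bal: "balanced_wrt N c r x" and nonarb: "nonarbitrary_wrt N c r x"
    and j: "j \<in> N" "x j < c j"
  shows "r j \<le> x j"
proof (rule ccontr)
  assume "\<not> r j \<le> x j"
  then have neg: "x j - r j < 0" by simp
  have "x i \<le> r i" if i: "i \<in> N" for i
  proof (cases "x i < c i")
    case True
    then show ?thesis using bal i j neg unfolding balanced_wrt_def by fastforce
  next
    case False
    then have "x i = c i" using assms(2) i by force
    then show ?thesis using nonarb i j neg unfolding nonarbitrary_wrt_def by fastforce
  qed
  then have "(\<Sum>i\<in>N. x i) < (\<Sum>i\<in>N. r i)"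
    using neg j by (intro sum_strict_mono_ex1[OF \<open>finite N\<close>]) auto
  with assms(3) show False by simp
qed

lemma balanced_nonarbitrary_imp_min_shift:
  assumes fin: "finite N" and xc: "\<forall>i\<in>N. x i \<le> c i"
    and sums: "(\<Sum>i\<in>N. x i) = (\<Sum>i\<in>N. r i)"
    and bal: "balanced_wrt N c r x" and nonarb: "nonarbitrary_wrt N c r x"
  shows "\<exists>lam\<ge>0. \<forall>i\<in>N. x i = min (c i) (r i + lam)"
proof (cases "\<exists>j\<in>N. x j < c j")
  case True
  then obtain j where j: "j \<in> N" "x j < c j" by blast
  define lam where "lam = x j - r j"
  have lam_nonneg: "0 \<le> lam"
    using unsaturated_gain_nonneg[OF assms j] by (simp add: lam_def)
  have "x i = min (c i) (r i + lam)" if i: "i \<in> N" for i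
  proof (cases "x i < c i")
    case True
    then show ?thesis using bal i j unfolding balanced_wrt_def lam_def by fastforce
  next
    case False
    then have "x i = c i" using xc i by force
    moreover have "c i \<le> r i + lam"
      using nonarb i j \<open>x i = c i\<close> lam_nonneg unfolding nonarbitrary_wrt_def lam_def by fastforce
    ultimately show ?thesis by simp
  qed
  with lam_nonneg show ?thesis by blast
next
  case False
  then have saturated: "\<forall>i\<in>N. x i = c i" using xc by force
  define lam where "lam = (\<Sum>i\<in>N. \<bar>c i - r i\<bar>)"
  have "\<bar>c i - r i\<bar> \<le> lam" if "i \<in> N" for i
    unfolding lam_def using fin that by (intro member_le_sum) auto
  then have "\<forall>i\<in>N. x i = min (c i) (r i + lam)"
    using saturated by fastforce
  moreover have "0 \<le> lam" unfolding lam_def by (simp add: sum_nonneg)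
  ultimately show ?thesis by blast
qed

lemma balanced_nonarbitrary_iff_min_shift:
  assumes "finite N" "allocation N c E x" "(\<Sum>i\<in>N. r i) = E"
  shows "balanced_wrt N c r x \<and> nonarbitrary_wrt N c r x \<longleftrightarrow>
    (\<exists>lam\<ge>0. (\<Sum>i\<in>N. min (c i) (r i + lam)) = E \<and> (\<forall>i\<in>N. x i = min (c i) (r i + lam)))"
proof
  have xc: "\<forall>i\<in>N. x i \<le> c i" and sum_x: "(\<Sum>i\<in>N. x i) = E"
    using assms(2) by (auto simp: allocation_def)
  assume "balanced_wrt N c r x \<and> nonarbitrary_wrt N c r x"
  then obtain lam where "0 \<le> lam" and shift: "\<forall>i\<in>N. x i = min (c i) (r i + lam)"
    using balanced_nonarbitrary_imp_min_shift[OF assms(1) xc] sum_x assms(3) by metis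
  moreover have "(\<Sum>i\<in>N. min (c i) (r i + lam)) = E"
    using shift sum_x by simp
  ultimately show "\<exists>lam\<ge>0. (\<Sum>i\<in>N. min (c i) (r i + lam)) = E \<and> (\<forall>i\<in>N. x i = min (c i) (r i + lam))"
    by blast
qed (auto intro: min_shift_imp_balanced_wrt min_shift_imp_nonarbitrary_wrt)

theorem theorem3:
  fixes \<Lambda> :: "srule \<Rightarrow> grule"
  assumes "operator \<Lambda>"
  shows "balanced_treatment \<Lambda> \<and> non_arbitrariness \<Lambda> \<longleftrightarrow> is_historical_operator \<Lambda>"
proof -
  have pointwise: "balanced_wrt N c (R N (adj_claims c h) E) (\<Lambda> R N c E h) \<and>
      nonarbitrary_wrt N c (R N (adj_claims c h) E) (\<Lambda> R N c E h) \<longleftrightarrow>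
    (\<exists>lam\<ge>0. (\<Sum>i\<in>N. min (c i) (R N (adj_claims c h) E i + lam)) = E \<and>
      (\<forall>i\<in>N. \<Lambda> R N c E h i = min (c i) (R N (adj_claims c h) E i + lam)))"
    if R: "standard_rule R" and hp: "hist_problem N c E h" for R N c E h
  proof (rule balanced_nonarbitrary_iff_min_shift)
    show "finite N" using hp by (simp add: hist_problem_def claims_problem_def)
    show "allocation N c E (\<Lambda> R N c E h)"
      using assms R hp by (simp add: operator_def general_rule_def)
    show "(\<Sum>i\<in>N. R N (adj_claims c h) E i) = E"
      using R claims_problem_adj_claims[OF hp] by (simp add: standard_rule_def allocation_def)
  qed
  have "balanced_treatment \<Lambda> \<and> non_arbitrariness \<Lambda> \<longleftrightarrow>
    (\<forall>R N c E h. standard_rule R \<longrightarrow> hist_problem N c E h \<longrightarrow>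
      balanced_wrt N c (R N (adj_claims c h) E) (\<Lambda> R N c E h) \<and>
      nonarbitrary_wrt N c (R N (adj_claims c h) E) (\<Lambda> R N c E h))"
    unfolding balanced_treatment_iff non_arbitrariness_iff by blast
  also have "\<dots> \<longleftrightarrow> is_historical_operator \<Lambda>"
    unfolding is_historical_operator_def by (simp add: pointwise)
  finally show ?thesis .
qed

end
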